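(* Let $\psi$ be a neighbor function with distance parameters $\sigma_1,\dots,\sigma_m$, let $\mu>0$, and let $Q_{\langle G,A_i\rangle}$ be a group-by sum query with disjoint groups $g_1,\dots,g_L$ of establishments. Let $u_{j,i}$ be public upper-bound values attached to each establishment $e_j$. The probably-no-clipping mechanism for $Q_{\langle G,A_i\rangle}$ with budget $\mu$ is: (1) for each group $g_\ell$ compute $u^*_\ell=\max_{e_j\in g_\ell}u_{j,i}$; (2) compute $\Delta_\ell=u^*_\ell-\psi^{-1}\big(\max(0,\psi(u^*_\ell)-\sigma_i)\big)$; (3) compute $T_{g_\ell}=\sum_{e_j\in g_\ell}\min(r_j[A_i],u^*_\ell)$; (4) release, for each group $g_\ell$, $T_{g_\ell}+N(0,(\Delta_\ell/\mu)^2)$ (independent noise across groups) together with the variance $(\Delta_\ell/\mu)^2$. This mechanism satisfies $\mu$-Gaussian Establishment DP with neighbor function $\psi$ and distance parameters $\sigma_1,\dots,\sigma_m$.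
   Context: A neighbor function is a function $\psi:\mathbb{R}_{\geq 0}\to\mathbb{R}$ that is strictly increasing, continuous, concave, and such that $x\mapsto\psi(e^{x})$ is convex. An establishment record $r_j$ (for establishment $e_j$) consists of public attribute values and nonnegative real confidential attribute values $r_j[A_1],\dots,r_j[A_m]$. A dataset is a finite collection of such records. Given nonnegative distance parameters $\sigma_1,\dots,\sigma_m$, a record $r$ is $\psi$-close to $r'$ if their public attribute values coincide and $|\psi(r[A_k])-\psi(r'[A_k])|\leq\sigma_k$ for all $k$. Datasets $D_1,D_2$ are $\psi$-neighbors if one is obtained from the other by replacing one record $r$ with a record $r'$ that is $\psi$-close to $r$. A mechanism $M$ satisfies $\mu$-Gaussian Establishment DP (with $\psi$ and $\sigma_1,\dots,\sigma_m$) if for all pairs of $\psi$-neighbors $D_1,D_2$ and all measurable $S$, $\Phi^{-1}(P(M(D_2)\in S))\leq\Phi^{-1}(P(M(D_1)\in S))+\mu$, with $\Phi$ the standard normal CDF. A group-by sum query $Q_{\langle G,A_i\rangle}$ partitions establishments into groups via a function $G$ of the public attributes only. The upper bounds $u_{j,i}$ are public quantities (in the paper they come from an earlier, separately accounted noisy release of each $\psi(r_j[A_i])$); in this statement they are inputs to the mechanism and are not recomputed from the confidential data. *)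

theory Defs
  imports "HOL-Probability.Probability"
begin

definition neighbor_function :: "(real \<Rightarrow> real) \<Rightarrow> bool" where
  "neighbor_function \<psi> \<longleftrightarrow>
     strict_mono_on {0..} \<psi> \<and> continuous_on {0..} \<psi> \<and> concave_on {0..} \<psi> \<and>
     convex_on UNIV (\<lambda>x. \<psi> (exp x))"

definition psi_inv :: "(real \<Rightarrow> real) \<Rightarrow> real \<Rightarrow> real" where
  "psi_inv \<psi> y = (THE x. 0 \<le> x \<and> \<psi> x = y)"

(* A record: public attributes and confidential attributes indexed by k *)
type_synonym 'p erecord = "'p \<times> (nat \<Rightarrow> real)"

definition psi_close :: "(real \<Rightarrow> real) \<Rightarrow> nat \<Rightarrow> (nat \<Rightarrow> real) \<Rightarrow> 'p erecord \<Rightarrow> 'p erecord \<Rightarrow> bool" where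
  "psi_close \<psi> m \<sigma> r r' \<longleftrightarrow> fst r = fst r' \<and>
     (\<forall>k\<in>{1..m}. \<bar>\<psi> (snd r k) - \<psi> (snd r' k)\<bar> \<le> \<sigma> k)"

definition valid_dataset :: "nat \<Rightarrow> 'e set \<Rightarrow> ('e \<Rightarrow> 'p erecord) \<Rightarrow> bool" where
  "valid_dataset m E D \<longleftrightarrow> (\<forall>j\<in>E. \<forall>k\<in>{1..m}. 0 \<le> snd (D j) k)"

definition psi_neighbors :: "(real \<Rightarrow> real) \<Rightarrow> nat \<Rightarrow> (nat \<Rightarrow> real) \<Rightarrow> 'e set \<Rightarrow>
    ('e \<Rightarrow> 'p erecord) \<Rightarrow> ('e \<Rightarrow> 'p erecord) \<Rightarrow> bool" where
  "psi_neighbors \<psi> m \<sigma> E D1 D2 \<longleftrightarrow>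
     (\<exists>j\<in>E. (\<forall>k\<in>E - {j}. D1 k = D2 k) \<and> psi_close \<psi> m \<sigma> (D1 j) (D2 j))"

definition Phi :: "real \<Rightarrow> real" where
  "Phi x = measure (density lborel std_normal_density) {..x}"

definition Phi_inv :: "real \<Rightarrow> ereal" where
  "Phi_inv p = (if p \<le> 0 then -\<infinity> else if 1 \<le> p then \<infinity> else ereal (THE x. Phi x = p))"

definition gaussian_EDP :: "(('e \<Rightarrow> 'p erecord) \<Rightarrow> 'o measure) \<Rightarrow> real \<Rightarrow>
    (real \<Rightarrow> real) \<Rightarrow> nat \<Rightarrow> (nat \<Rightarrow> real) \<Rightarrow> 'e set \<Rightarrow> bool" where
  "gaussian_EDP M \<mu> \<psi> m \<sigma> E \<longleftrightarrow>
     (\<forall>D1 D2. valid_dataset m E D1 \<and> valid_dataset m E D2 \<and> psi_neighbors \<psi> m \<sigma> E D1 D2 \<longrightarrow>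
        (\<forall>S \<in> sets (M D1). Phi_inv (measure (M D2) S) \<le> Phi_inv (measure (M D1) S) + ereal \<mu>))"

definition gaussian :: "real \<Rightarrow> real \<Rightarrow> real measure" where
  "gaussian c s = (if s = 0 then return borel c else density lborel (normal_density c s))"

definition group_labels :: "('p \<Rightarrow> 'g) \<Rightarrow> 'e set \<Rightarrow> ('e \<Rightarrow> 'p erecord) \<Rightarrow> 'g set" where
  "group_labels G E D = (\<lambda>j. G (fst (D j))) ` E"

definition group_members :: "('p \<Rightarrow> 'g) \<Rightarrow> 'e set \<Rightarrow> ('e \<Rightarrow> 'p erecord) \<Rightarrow> 'g \<Rightarrow> 'e set" where
  "group_members G E D g = {j \<in> E. G (fst (D j)) = g}"

definition u_star :: "('p \<Rightarrow> 'g) \<Rightarrow> 'e set \<Rightarrow> ('e \<Rightarrow> nat \<Rightarrow> real) \<Rightarrow> nat \<Rightarrow>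
    ('e \<Rightarrow> 'p erecord) \<Rightarrow> 'g \<Rightarrow> real" where
  "u_star G E u i D g = Max ((\<lambda>j. u j i) ` group_members G E D g)"

(* step (2); the lower clamp is psi(0) (= 0 under normalisation psi(0)=0) *)
definition clip_delta :: "(real \<Rightarrow> real) \<Rightarrow> real \<Rightarrow> real \<Rightarrow> real" where
  "clip_delta \<psi> s ustar = ustar - psi_inv \<psi> (max (\<psi> 0) (\<psi> ustar - s))"

definition clipped_total :: "('p \<Rightarrow> 'g) \<Rightarrow> 'e set \<Rightarrow> ('e \<Rightarrow> nat \<Rightarrow> real) \<Rightarrow> nat \<Rightarrow>
    ('e \<Rightarrow> 'p erecord) \<Rightarrow> 'g \<Rightarrow> real" where
  "clipped_total G E u i D g =
     (\<Sum>j\<in>group_members G E D g. min (snd (D j) i) (u_star G E u i D g))"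

definition pnc_mechanism :: "(real \<Rightarrow> real) \<Rightarrow> (nat \<Rightarrow> real) \<Rightarrow> real \<Rightarrow> ('p \<Rightarrow> 'g) \<Rightarrow>
    'e set \<Rightarrow> ('e \<Rightarrow> nat \<Rightarrow> real) \<Rightarrow> nat \<Rightarrow> ('e \<Rightarrow> 'p erecord) \<Rightarrow> ('g \<Rightarrow> real \<times> real) measure" where
  "pnc_mechanism \<psi> \<sigma> \<mu> G E u i D =
     (\<Pi>\<^sub>M g\<in>group_labels G E D.
        (let s = clip_delta \<psi> (\<sigma> i) (u_star G E u i D g) / \<mu> in
         distr (gaussian (clipped_total G E u i D g) s) (borel \<Otimes>\<^sub>M borel) (\<lambda>y. (y, s\<^sup>2))))"

end

theory Submission
  imports Defs
begin

text \<open>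
  Neighbouring datasets differ only in the confidential values of one establishment \<open>e\<^sub>j\<close>, so
  every released total except that of the group \<open>g\<close> of \<open>e\<^sub>j\<close> is unchanged. Since \<open>\<psi>\<close> is
  increasing and concave, its increments over intervals of a fixed length decrease to the right;
  hence among the subintervals of \<open>[0, u\<^sup>*]\<close> with \<open>\<psi>\<close>-increment at most \<open>\<sigma>\<^sub>i\<close> the longest one
  ends at \<open>u\<^sup>*\<close> and has length \<open>\<Delta>\<close>, so clipping at \<open>u\<^sup>*\<close> moves the total of \<open>g\<close> by at most \<open>\<Delta>\<close>.
  The two output distributions are therefore products of the same Gaussian releases except in
  the coordinate \<open>g\<close>, where the means differ by at most \<open>\<mu>\<close> standard deviations. By the
  Neyman--Pearson lemma the most powerful test of such a shift is a half-line, whose power at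
  level \<open>\<alpha>\<close> is \<open>\<Phi>(\<Phi>\<^sup>-\<^sup>1(\<alpha>) + \<mu>)\<close>.
\<close>

section \<open>The standard normal distribution function\<close>

abbreviation std_normal :: "real measure" where
  "std_normal \<equiv> density lborel std_normal_density"

interpretation std_normal: real_distribution std_normal
  by (simp add: real_distribution_def real_distribution_axioms_def prob_space_normal_density)

lemma Phi_eq_cdf: "Phi = cdf std_normal"
  by (auto simp: Phi_def cdf_def)

lemma null_sets_std_normal: "null_sets std_normal = null_sets lborel"
proof (intro set_eqI iffI)
  fix A :: "real set"
  assume "A \<in> null_sets std_normal"
  then have "A \<in> sets lborel" "AE x in lborel. x \<notin> A"
    by (auto simp: null_sets_density_iff normal_density_pos[THEN less_imp_neq, symmetric])
  then show "A \<in> null_sets lborel"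
    by (simp only: AE_iff_null_sets)
next
  fix A :: "real set"
  assume "A \<in> null_sets lborel"
  moreover have "AE x in lborel. x \<notin> A"
    using \<open>A \<in> null_sets lborel\<close> by (rule AE_not_in)
  ultimately show "A \<in> null_sets std_normal"
    by (auto simp: null_sets_density_iff dest: null_setsD2 elim!: eventually_mono)
qed

lemma isCont_Phi: "isCont Phi x"
proof -
  have "{x} \<in> null_sets std_normal"
    by (simp add: null_sets_std_normal countable_imp_null_set_lborel)
  then show ?thesis
    unfolding Phi_eq_cdf std_normal.isCont_cdf
    by (simp add: measure_def null_setsD1)
qed

lemma strict_mono_Phi: "strict_mono Phi"
proof
  fix x y :: real
  assume "x < y"
  then have "{x<..y} \<notin> null_sets std_normal"
    by (auto simp: null_sets_std_normal dest: null_setsD1)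
  then have "emeasure std_normal {x<..y} \<noteq> 0"
    using null_setsI[of std_normal "{x<..y}"] by auto
  then have "0 < measure std_normal {x<..y}"
    by (simp add: std_normal.emeasure_eq_measure less_le)
  then show "Phi x < Phi y"
    using std_normal.cdf_diff_eq[OF \<open>x < y\<close>] by (simp add: Phi_eq_cdf)
qed

lemma Phi_gt_0: "0 < Phi x"
  using strict_mono_Phi[THEN strict_monoD, of "x - 1" x] std_normal.cdf_nonneg[of "x - 1"]
  by (simp add: Phi_eq_cdf)

lemma Phi_lt_1: "Phi x < 1"
  using strict_mono_Phi[THEN strict_monoD, of x "x + 1"] std_normal.cdf_bounded_prob[of "x + 1"]
  by (simp add: Phi_eq_cdf)

lemma Phi_surj:
  assumes "0 < p" "p < 1"
  obtains a where "Phi a = p"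
proof -
  obtain a where a: "Phi a < p"
    using order_tendstoD(2)[OF std_normal.cdf_lim_at_bot \<open>0 < p\<close>]
    by (auto simp: Phi_eq_cdf eventually_at_bot_linorder)
  obtain b where b: "p < Phi b"
    using order_tendstoD(1)[OF std_normal.cdf_lim_at_top_prob \<open>p < 1\<close>]
    by (auto simp: Phi_eq_cdf eventually_at_top_linorder)
  have "a \<le> b"
    by (rule strict_mono_less_eq[OF strict_mono_Phi, THEN iffD1]) (use a b in linarith)
  moreover have "continuous_on {a..b} Phi"
    by (intro continuous_at_imp_continuous_on ballI isCont_Phi)
  ultimately have "\<exists>x. a \<le> x \<and> x \<le> b \<and> Phi x = p"
    using a b by (intro IVT') simp_all
  then show ?thesis
    using that by blast
qed

lemma Phi_inv_Phi: "Phi_inv (Phi x) = ereal x"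
proof -
  have "(THE y. Phi y = Phi x) = x"
    using strict_mono_Phi by (auto dest: strict_mono_eq)
  then show ?thesis
    using Phi_gt_0[of x] Phi_lt_1[of x] by (simp add: Phi_inv_def)
qed

lemma Phi_inv_mono:
  assumes "p \<le> q"
  shows "Phi_inv p \<le> Phi_inv q"
proof (cases "p \<le> 0 \<or> 1 \<le> q")
  case True
  then show ?thesis by (auto simp: Phi_inv_def)
next
  case False
  with assms have "0 < p" "p < 1" "0 < q" "q < 1" by auto
  obtain a b where a: "Phi a = p" and b: "Phi b = q"
    using Phi_surj \<open>0 < p\<close> \<open>p < 1\<close> \<open>0 < q\<close> \<open>q < 1\<close> by meson
  have "a \<le> b"
    by (rule strict_mono_less_eq[OF strict_mono_Phi, THEN iffD1]) (use assms a b in simp)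
  then show ?thesis
    using Phi_inv_Phi[of a] Phi_inv_Phi[of b] by (simp add: a b)
qed

section \<open>Testing a Gaussian shift\<close>

lemma prob_space_if_distributed_normal:
  assumes "distributed M lborel X (normal_density c s)" "0 < s"
  shows "prob_space M"
  using assms prob_space_normal_density
  by (intro prob_space_distrD[of X M lborel]) (auto simp: distributed_def)

lemma measure_le_eq_Phi:
  assumes "distributed P lborel Z std_normal_density"
  shows "measure P {\<omega>\<in>space P. Z \<omega> \<le> a} = Phi a"
proof -
  have "Z \<in> measurable P lborel" and law: "distr P lborel Z = std_normal"
    using assms by (auto simp: distributed_def)
  then have "Phi a = measure P (Z -` {..a} \<inter> space P)"
    unfolding Phi_def law[symmetric] by (simp add: measure_distr)
  also have "Z -` {..a} \<inter> space P = {\<omega>\<in>space P. Z \<omega> \<le> a}"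
    by auto
  finally show ?thesis ..
qed

lemma neyman_pearson:
  fixes L :: "'a \<Rightarrow> ennreal"
  assumes P: "finite_measure P" and L: "L \<in> borel_measurable P"
    and S: "S \<in> sets P" and H: "H \<in> sets P" and "emeasure P S = emeasure P H"
    and t: "t \<noteq> \<top>" and L_ge: "\<And>\<omega>. \<omega> \<in> H \<Longrightarrow> t \<le> L \<omega>"
    and L_le: "\<And>\<omega>. \<omega> \<in> space P - H \<Longrightarrow> L \<omega> \<le> t"
  shows "emeasure (density P L) S \<le> emeasure (density P L) H"
proof -
  \<comment> \<open>Pointwise \<open>(L \<omega> - t) (1\<^sub>S \<omega> - 1\<^sub>H \<omega>) \<le> 0\<close>; integrate and cancel \<open>t P(S) = t P(H)\<close>.\<close>
  have density: "emeasure (density P L) A + t * emeasure P B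
      = (\<integral>\<^sup>+ \<omega>. L \<omega> * indicator A \<omega> + t * indicator B \<omega> \<partial>P)" if "A \<in> sets P" "B \<in> sets P" for A B
    using that L by (simp add: emeasure_density nn_integral_add nn_integral_cmult_indicator)
  have "emeasure (density P L) S + t * emeasure P H
      \<le> emeasure (density P L) H + t * emeasure P S"
    unfolding density[OF S H] density[OF H S]
  proof (intro nn_integral_mono)
    fix \<omega> assume "\<omega> \<in> space P"
    then show "L \<omega> * indicator S \<omega> + t * indicator H \<omega> \<le> L \<omega> * indicator H \<omega> + t * indicator S \<omega>"
      using L_ge[of \<omega>] L_le[of \<omega>] by (cases "\<omega> \<in> H"; cases "\<omega> \<in> S") simp_all
  qed
  moreover have "t * emeasure P H \<noteq> \<top>"
    using t finite_measure.emeasure_finite[OF P] by (simp add: ennreal_mult_eq_top_iff)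
  ultimately show ?thesis
    using \<open>emeasure P S = emeasure P H\<close> by simp
qed

lemma measure_std_normal_shift_le:
  assumes Z: "distributed P lborel Z std_normal_density"
    and Z': "distributed P' lborel (\<lambda>\<omega>. Z \<omega> + e) std_normal_density"
    and P': "P' = density P (\<lambda>\<omega>. ennreal (exp (- e * Z \<omega> - e\<^sup>2 / 2)))"
    and "0 \<le> e" and S: "S \<in> sets P" and a: "measure P S = Phi a"
  shows "measure P' S \<le> Phi (a + e)"
proof -
  interpret P: prob_space P
    using Z by (rule prob_space_if_distributed_normal) simp
  interpret P': prob_space P'
    using Z' by (rule prob_space_if_distributed_normal) simp
  have [measurable]: "Z \<in> borel_measurable P"
    using Z by (simp add: distributed_def)
  define H where "H = {\<omega> \<in> space P. Z \<omega> \<le> a}"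
  have H: "H \<in> sets P"
    unfolding H_def by measurable
  have "emeasure P' S \<le> emeasure P' H"
    unfolding P'
  proof (rule neyman_pearson[where t = "ennreal (exp (- e * a - e\<^sup>2 / 2))"])
    show "emeasure P S = emeasure P H"
      using measure_le_eq_Phi[OF Z] a by (simp add: P.emeasure_eq_measure H_def)
    show "ennreal (exp (- e * a - e\<^sup>2 / 2)) \<le> ennreal (exp (- e * Z \<omega> - e\<^sup>2 / 2))"
      if "\<omega> \<in> H" for \<omega>
      using that \<open>0 \<le> e\<close> by (auto simp: H_def intro!: ennreal_leI mult_left_mono)
    show "ennreal (exp (- e * Z \<omega> - e\<^sup>2 / 2)) \<le> ennreal (exp (- e * a - e\<^sup>2 / 2))"
      if "\<omega> \<in> space P - H" for \<omega>
      using that \<open>0 \<le> e\<close> by (auto simp: H_def intro!: ennreal_leI mult_left_mono)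
  qed (use S H P.finite_measure_axioms in auto)
  then have "measure P' S \<le> measure P' H"
    by (simp add: P'.emeasure_eq_measure)
  also have "measure P' H = Phi (a + e)"
    using measure_le_eq_Phi[OF Z', of "a + e"] P' by (simp add: H_def)
  finally show ?thesis .
qed

lemma Phi_inv_std_normal_shift_le:
  assumes Z: "distributed P lborel Z std_normal_density"
    and Z': "distributed P' lborel (\<lambda>\<omega>. Z \<omega> + e) std_normal_density"
    and P': "P' = density P (\<lambda>\<omega>. ennreal (exp (- e * Z \<omega> - e\<^sup>2 / 2)))"
    and e: "0 \<le> e" "e \<le> \<mu>" and S: "S \<in> sets P"
  shows "Phi_inv (measure P' S) \<le> Phi_inv (measure P S) + \<mu>"
proof -
  interpret P: prob_space P
    using Z by (rule prob_space_if_distributed_normal) simp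
  interpret P': prob_space P'
    using Z' by (rule prob_space_if_distributed_normal) simp
  have [measurable]: "Z \<in> borel_measurable P"
    using Z by (simp add: distributed_def)
  consider "measure P S = 0" | "1 \<le> measure P S" | "0 < measure P S" "measure P S < 1"
    by (metis less_le not_le measure_nonneg)
  then show ?thesis
  proof cases
    case 1
    then have "S \<in> null_sets P"
      using S by (simp add: P.emeasure_eq_measure null_setsI)
    then have "emeasure P' S = 0"
      unfolding P' using S by (simp add: emeasure_density nn_integral_null_set)
    then show ?thesis
      by (simp add: Phi_inv_def P'.emeasure_eq_measure)
  next
    case 2
    then show ?thesis
      by (simp add: Phi_inv_def)
  next
    case 3
    then obtain a where a: "measure P S = Phi a"
      using Phi_surj by metis
    have "measure P' S \<le> Phi (a + \<mu>)"
      using measure_std_normal_shift_le[OF Z Z' P' e(1) S a] e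
      by (simp add: strict_mono_less_eq[OF strict_mono_Phi] order_trans)
    then have "Phi_inv (measure P' S) \<le> ereal (a + \<mu>)"
      by (metis Phi_inv_mono Phi_inv_Phi)
    then show ?thesis
      by (simp add: a Phi_inv_Phi)
  qed
qed

definition normal_lr :: "real \<Rightarrow> real \<Rightarrow> real \<Rightarrow> real \<Rightarrow> real" where
  "normal_lr s c1 c2 x = exp ((c2 - c1) / s * ((x - c1) / s) - ((c2 - c1) / s)\<^sup>2 / 2)"

lemma borel_measurable_normal_lr [measurable]: "normal_lr s c1 c2 \<in> borel_measurable borel"
  unfolding normal_lr_def by measurable

lemma normal_density_mult_normal_lr:
  assumes "0 < s"
  shows "normal_density c1 s x * normal_lr s c1 c2 x = normal_density c2 s x"
proof -
  have "- (x - c1)\<^sup>2 / (2 * s\<^sup>2) + ((c2 - c1) / s * ((x - c1) / s) - ((c2 - c1) / s)\<^sup>2 / 2)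
      = - (x - c2)\<^sup>2 / (2 * s\<^sup>2)"
    using assms by (simp add: field_simps power2_eq_square)
  then show ?thesis
    unfolding normal_density_def normal_lr_def by (simp add: exp_add[symmetric] mult.assoc)
qed

lemma Phi_inv_normal_shift_le:
  assumes s: "0 < s"
    and X: "distributed P lborel X (normal_density c1 s)"
    and X': "distributed P' lborel X (normal_density c2 s)"
    and P': "P' = density P (\<lambda>\<omega>. ennreal (normal_lr s c1 c2 (X \<omega>)))"
    and c: "\<bar>c2 - c1\<bar> \<le> s * \<mu>" and S: "S \<in> sets P"
  shows "Phi_inv (measure P' S) \<le> Phi_inv (measure P S) + \<mu>"
proof -
  \<comment> \<open>The sign of \<open>\<alpha>\<close> is chosen so that the standardised shift \<open>e\<close> is nonnegative.\<close>
  define \<alpha> where "\<alpha> = (if c2 \<le> c1 then 1 else - 1) / s"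
  define e where "e = \<alpha> * (c1 - c2)"
  have "\<alpha> \<noteq> 0" "\<bar>\<alpha>\<bar> * s = 1" "\<alpha>\<^sup>2 = 1 / s\<^sup>2"
    using s by (auto simp: \<alpha>_def power_divide)
  have standardize: "distributed Q lborel (\<lambda>\<omega>. - \<alpha> * c + \<alpha> * X \<omega>) std_normal_density"
    if "distributed Q lborel X (normal_density c s)" for Q c
  proof -
    interpret Q: prob_space Q
      using that s by (rule prob_space_if_distributed_normal)
    show ?thesis
      using Q.normal_density_affine[OF that s \<open>\<alpha> \<noteq> 0\<close>, of "- \<alpha> * c"] \<open>\<bar>\<alpha>\<bar> * s = 1\<close> by simp
  qed
  have "(\<lambda>\<omega>. - \<alpha> * c2 + \<alpha> * X \<omega>) = (\<lambda>\<omega>. (- \<alpha> * c1 + \<alpha> * X \<omega>) + e)"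
    by (simp add: e_def fun_eq_iff algebra_simps)
  moreover have "normal_lr s c1 c2 x = exp (- e * (- \<alpha> * c1 + \<alpha> * x) - e\<^sup>2 / 2)" for x
  proof -
    have "- e * (- \<alpha> * c1 + \<alpha> * x) - e\<^sup>2 / 2 = \<alpha>\<^sup>2 * ((c2 - c1) * (x - c1) - (c2 - c1)\<^sup>2 / 2)"
      by (simp add: e_def power2_eq_square algebra_simps)
    also have "\<dots> = (c2 - c1) / s * ((x - c1) / s) - ((c2 - c1) / s)\<^sup>2 / 2"
      unfolding \<open>\<alpha>\<^sup>2 = 1 / s\<^sup>2\<close> using s by (simp add: power_divide field_simps power2_eq_square)
    finally show ?thesis
      by (simp add: normal_lr_def)
  qed
  moreover have "0 \<le> e" "e \<le> \<mu>"
    using s c by (auto simp: e_def \<alpha>_def field_simps)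
  ultimately show ?thesis
    using Phi_inv_std_normal_shift_le[OF standardize[OF X] _ _ _ _ S] standardize[OF X'] P' by simp
qed

section \<open>Products of Gaussian releases\<close>

definition noisy_release :: "real \<Rightarrow> real \<Rightarrow> (real \<times> real) measure" where
  "noisy_release c s = distr (gaussian c s) (borel \<Otimes>\<^sub>M borel) (\<lambda>y. (y, s\<^sup>2))"

lemma sets_gaussian [measurable_cong]: "sets (gaussian c s) = sets borel"
  by (simp add: gaussian_def)

lemma prob_space_gaussian: "prob_space (gaussian c s)"
proof -
  have "normal_density c s = normal_density c \<bar>s\<bar>"
    by (simp add: normal_density_def fun_eq_iff)
  then show ?thesis
    using prob_space_normal_density[of "\<bar>s\<bar>" c] by (auto simp: gaussian_def intro: prob_space_return)
qed

lemma sets_noisy_release [measurable_cong]: "sets (noisy_release c s) = sets (borel \<Otimes>\<^sub>M borel)"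
  by (simp add: noisy_release_def)

lemma prob_space_noisy_release: "prob_space (noisy_release c s)"
  unfolding noisy_release_def
  by (intro prob_space.prob_space_distr prob_space_gaussian) simp

lemma noisy_release_eq_density:
  assumes "0 < s"
  shows "noisy_release c2 s = density (noisy_release c1 s) (\<lambda>p. ennreal (normal_lr s c1 c2 (fst p)))"
proof -
  have "density (noisy_release c1 s) (\<lambda>p. ennreal (normal_lr s c1 c2 (fst p)))
      = distr (density (density lborel (normal_density c1 s)) (\<lambda>y. ennreal (normal_lr s c1 c2 y)))
          (borel \<Otimes>\<^sub>M borel) (\<lambda>y. (y, s\<^sup>2))"
    using assms unfolding noisy_release_def gaussian_def
    by (subst density_distr) auto
  also have "\<dots> = distr (density lborel (normal_density c2 s)) (borel \<Otimes>\<^sub>M borel) (\<lambda>y. (y, s\<^sup>2))"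
    using assms
    by (subst density_density_eq) (auto simp: normal_density_mult_normal_lr ennreal_mult'[symmetric])
  finally show ?thesis
    using assms by (simp add: noisy_release_def gaussian_def)
qed

lemma indicator_PiE_eq_prod:
  assumes "finite I" "\<omega> \<in> extensional I"
  shows "indicator (Pi\<^sub>E I A) \<omega> = (\<Prod>j\<in>I. indicator (A j) (\<omega> j) :: 'b :: comm_semiring_1)"
proof (cases "\<forall>j\<in>I. \<omega> j \<in> A j")
  case True
  then show ?thesis
    using assms by (simp add: PiE_iff)
next
  case False
  then obtain j where "j \<in> I" "\<omega> j \<notin> A j"
    by blast
  with assms have "(\<Prod>j\<in>I. indicator (A j) (\<omega> j) :: 'b) = 0"
    by (metis indicator_simps(2) prod_zero)
  then show ?thesis
    using False by (simp add: PiE_iff)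
qed

lemma PiM_update_density:
  assumes I: "finite I" and i: "i \<in> I" and M: "product_sigma_finite M"
    and f[measurable]: "f \<in> borel_measurable (M i)"
    and Mf: "sigma_finite_measure (density (M i) f)"
  shows "PiM I (M(i := density (M i) f)) = density (PiM I M) (\<lambda>\<omega>. f (\<omega> i))"
proof -
  let ?N = "M(i := density (M i) f)"
  interpret M: product_sigma_finite M by (rule M)
  interpret N: product_sigma_finite ?N
    by (rule product_sigma_finite.intro) (simp add: Mf M.sigma_finite_measures)
  have f_PiM[measurable]: "(\<lambda>\<omega>. f (\<omega> i)) \<in> borel_measurable (PiM I M)"
    using i by measurable
  show ?thesis
  proof (rule N.PiM_eqI[OF I, symmetric])
    show "sets (density (PiM I M) (\<lambda>\<omega>. f (\<omega> i))) = sets (PiM I ?N)"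
      by (simp, rule sets_PiM_cong) simp_all
  next
    fix A assume A: "\<And>j. j \<in> I \<Longrightarrow> A j \<in> sets (?N j)"
    define h where "h j x = (if j = i then f x else 1) * indicator (A j) x" for j x
    have A_sets[measurable]: "A j \<in> sets (M j)" if "j \<in> I" for j
      using A[OF that] by (cases "j = i") simp_all
    have h: "h j \<in> borel_measurable (M j)" if "j \<in> I" for j
    proof (cases "j = i")
      case True
      with that show ?thesis
        unfolding h_def by simp measurable
    qed (use that in \<open>simp add: h_def[abs_def]\<close>)
    have "emeasure (density (PiM I M) (\<lambda>\<omega>. f (\<omega> i))) (Pi\<^sub>E I A)
        = (\<integral>\<^sup>+ \<omega>. f (\<omega> i) * indicator (Pi\<^sub>E I A) \<omega> \<partial>PiM I M)"
      using A_sets by (simp add: emeasure_density sets_PiM_I_finite[OF I])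
    also have "\<dots> = (\<integral>\<^sup>+ \<omega>. (\<Prod>j\<in>I. h j (\<omega> j)) \<partial>PiM I M)"
    proof (rule nn_integral_cong)
      fix \<omega> assume "\<omega> \<in> space (PiM I M)"
      then have "\<omega> \<in> extensional I"
        by (simp add: space_PiM PiE_def)
      then show "f (\<omega> i) * indicator (Pi\<^sub>E I A) \<omega> = (\<Prod>j\<in>I. h j (\<omega> j))"
        using I i by (simp add: h_def prod.distrib indicator_PiE_eq_prod prod.delta)
    qed
    also have "\<dots> = (\<Prod>j\<in>I. integral\<^sup>N (M j) (h j))"
      using I h by (rule M.product_nn_integral_prod)
    also have "\<dots> = (\<Prod>j\<in>I. emeasure (?N j) (A j))"
      using A_sets
      by (intro prod.cong refl) (auto simp: h_def[abs_def] emeasure_density mult.commute)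
    finally show "emeasure (density (PiM I M) (\<lambda>\<omega>. f (\<omega> i))) (Pi\<^sub>E I A) = (\<Prod>j\<in>I. emeasure (?N j) (A j))" .
  qed
qed

lemma distributed_PiM_noisy_release:
  assumes i: "i \<in> I" and s: "0 < s i"
  shows "distributed (PiM I (\<lambda>j. noisy_release (c j) (s j))) lborel (\<lambda>\<omega>. fst (\<omega> i))
           (normal_density (c i) (s i))"
proof -
  let ?P = "PiM I (\<lambda>j. noisy_release (c j) (s j))"
  have "distr ?P lborel (\<lambda>\<omega>. fst (\<omega> i))
      = distr (distr ?P (noisy_release (c i) (s i)) (\<lambda>\<omega>. \<omega> i)) lborel fst"
    using i by (subst distr_distr) (auto simp: comp_def)
  also have "\<dots> = distr (noisy_release (c i) (s i)) lborel fst"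
    using distr_PiM_component[of I "\<lambda>j. noisy_release (c j) (s j)" i] i
    by (simp add: prob_space_noisy_release)
  also have "\<dots> = density lborel (normal_density (c i) (s i))"
    using s by (simp add: noisy_release_def gaussian_def distr_distr comp_def distr_id2)
  finally show ?thesis
    using i by (simp add: distributed_def)
qed

lemma Phi_inv_PiM_noisy_release_le:
  assumes I: "finite I" and i: "i \<in> I" and \<mu>: "0 \<le> \<mu>"
    and c': "\<And>j. j \<noteq> i \<Longrightarrow> c' j = c j" and shift: "\<bar>c' i - c i\<bar> \<le> s i * \<mu>"
    and S: "S \<in> sets (PiM I (\<lambda>j. noisy_release (c j) (s j)))"
  shows "Phi_inv (measure (PiM I (\<lambda>j. noisy_release (c' j) (s j))) S)
           \<le> Phi_inv (measure (PiM I (\<lambda>j. noisy_release (c j) (s j))) S) + \<mu>"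
proof (cases "c' i = c i")
  case True
  then have "c' = c"
    using c' by (intro ext) metis
  then show ?thesis
    using \<mu> by (cases "Phi_inv (measure (PiM I (\<lambda>j. noisy_release (c j) (s j))) S)") simp_all
next
  case False
  then have "0 < s i * \<mu>"
    using shift by linarith
  then have s: "0 < s i"
    using \<mu> by (simp add: zero_less_mult_iff)
  let ?M = "\<lambda>j. noisy_release (c j) (s j)"
  let ?L = "\<lambda>p. ennreal (normal_lr (s i) (c i) (c' i) (fst p))"
  have "PiM I (\<lambda>j. noisy_release (c' j) (s j)) = PiM I (?M(i := density (?M i) ?L))"
    using c' by (intro PiM_cong) (auto simp: noisy_release_eq_density[OF s])
  also have "\<dots> = density (PiM I ?M) (\<lambda>\<omega>. ?L (\<omega> i))"
  proof (rule PiM_update_density[OF I i])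
    show "product_sigma_finite ?M"
      by (simp add: product_sigma_finite.intro prob_space_imp_sigma_finite prob_space_noisy_release)
    show "sigma_finite_measure (density (?M i) ?L)"
      by (simp add: noisy_release_eq_density[OF s, symmetric] prob_space_imp_sigma_finite
          prob_space_noisy_release)
  qed simp
  finally show ?thesis
    using Phi_inv_normal_shift_le[OF s distributed_PiM_noisy_release[of i I s c, OF i s]
        distributed_PiM_noisy_release[of i I s c', OF i s], of \<mu> S] shift S
    by (simp add: abs_minus_commute)
qed

section \<open>Sensitivity of clipping\<close>

lemma concave_on_diff_shift_le:
  fixes f :: "real \<Rightarrow> real"
  assumes f: "concave_on A f" and A: "x \<in> A" "y + h \<in> A" and "x \<le> y" "0 \<le> h"
  shows "f (y + h) - f y \<le> f (x + h) - f x"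
proof (cases "x = y + h")
  case True
  then show ?thesis
    using \<open>x \<le> y\<close> \<open>0 \<le> h\<close> by simp
next
  case False
  define d where "d = y + h - x"
  have "0 < d"
    using False \<open>x \<le> y\<close> \<open>0 \<le> h\<close> by (simp add: d_def)
  define t1 where "t1 = (y - x) / d"
  define t2 where "t2 = h / d"
  have t1: "0 \<le> t1" "t1 \<le> 1" and t2: "0 \<le> t2" "t2 \<le> 1"
    using \<open>0 < d\<close> \<open>x \<le> y\<close> \<open>0 \<le> h\<close> by (auto simp: t1_def t2_def d_def field_simps)
  have "t1 + t2 = 1"
    using \<open>0 < d\<close> by (simp add: t1_def t2_def d_def flip: add_divide_distrib)
  have "t1 * d = y - x" "t2 * d = h"
    using \<open>0 < d\<close> by (simp_all add: t1_def t2_def)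
  moreover have "(1 - t) *\<^sub>R x + t *\<^sub>R (y + h) = x + t * d" for t
    by (simp add: d_def algebra_simps)
  ultimately have "(1 - t1) *\<^sub>R x + t1 *\<^sub>R (y + h) = y" "(1 - t2) *\<^sub>R x + t2 *\<^sub>R (y + h) = x + h"
    by auto
  then have "(1 - t1) * f x + t1 * f (y + h) \<le> f y" "(1 - t2) * f x + t2 * f (y + h) \<le> f (x + h)"
    using concave_onD[OF f t1 A] concave_onD[OF f t2 A] by simp_all
  moreover have "(1 - t1) * f x + t1 * f (y + h) + ((1 - t2) * f x + t2 * f (y + h)) = f x + f (y + h)"
    using \<open>t1 + t2 = 1\<close> by (simp add: algebra_simps flip: distrib_right)
  ultimately show ?thesis
    by linarith
qed

lemma psi_inv_psi:
  assumes "strict_mono_on {0..} \<psi>" "0 \<le> x"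
  shows "psi_inv \<psi> (\<psi> x) = x"
  unfolding psi_inv_def using assms by (auto dest: strict_mono_on_eqD)

lemma psi_psi_inv:
  assumes mono: "strict_mono_on {0..} \<psi>" and cont: "continuous_on {0..} \<psi>"
    and "0 \<le> u" "\<psi> 0 \<le> y" "y \<le> \<psi> u"
  shows "psi_inv \<psi> y \<in> {0..u}" "\<psi> (psi_inv \<psi> y) = y"
proof -
  have "continuous_on {0..u} \<psi>"
    using cont by (rule continuous_on_subset) auto
  then obtain x where "0 \<le> x" "x \<le> u" "\<psi> x = y"
    using IVT'[of \<psi> 0 y u] assms by auto
  then show "psi_inv \<psi> y \<in> {0..u}" "\<psi> (psi_inv \<psi> y) = y"
    using psi_inv_psi[OF mono] by auto
qed

lemma clip_delta_ge:
  assumes mono: "strict_mono_on {0..} \<psi>" and cont: "continuous_on {0..} \<psi>"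
    and conc: "concave_on {0..} \<psi>"
    and ab: "0 \<le> a" "a \<le> b" "b \<le> u" and "0 \<le> \<sigma>" and close: "\<psi> b - \<psi> a \<le> \<sigma>"
  shows "b - a \<le> clip_delta \<psi> \<sigma> u"
proof (rule ccontr)
  define v where "v = psi_inv \<psi> (max (\<psi> 0) (\<psi> u - \<sigma>))"
  have "\<psi> 0 \<le> \<psi> u"
    using ab by (intro strict_mono_on_leD[OF mono]) auto
  then have "\<psi> 0 \<le> max (\<psi> 0) (\<psi> u - \<sigma>)" "max (\<psi> 0) (\<psi> u - \<sigma>) \<le> \<psi> u"
    using \<open>0 \<le> \<sigma>\<close> by auto
  then have v: "v \<in> {0..u}" "\<psi> v = max (\<psi> 0) (\<psi> u - \<sigma>)"
    using psi_psi_inv[OF mono cont, of u] ab unfolding v_def by auto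
  assume "\<not> b - a \<le> clip_delta \<psi> \<sigma> u"
  then have "u - v < b - a"
    by (simp add: clip_delta_def v_def)
  define a' where "a' = b - (u - v)"
  have a': "a < a'" "a' \<le> v"
    using \<open>u - v < b - a\<close> ab by (auto simp: a'_def)
  have "\<psi> u - \<psi> v \<le> \<psi> b - \<psi> a'"
    using concave_on_diff_shift_le[OF conc, of a' v "u - v"] a' ab v by (simp add: a'_def)
  also have "\<dots> < \<psi> b - \<psi> a"
    using a' ab by (simp add: strict_mono_onD[OF mono])
  finally have "\<psi> v = \<psi> 0"
    using v close by auto
  then have "v = 0"
    using v by (auto dest: strict_mono_on_eqD[OF mono])
  then show False
    using a' ab by simp
qed

lemma abs_min_diff_le_clip_delta:
  assumes mono: "strict_mono_on {0..} \<psi>" and cont: "continuous_on {0..} \<psi>"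
    and conc: "concave_on {0..} \<psi>"
    and "0 \<le> x1" "0 \<le> x2" "0 \<le> u" "0 \<le> \<sigma>" and close: "\<bar>\<psi> x1 - \<psi> x2\<bar> \<le> \<sigma>"
  shows "\<bar>min x1 u - min x2 u\<bar> \<le> clip_delta \<psi> \<sigma> u"
proof -
  have psi_min: "\<psi> (min x u) = min (\<psi> x) (\<psi> u)" if "0 \<le> x" for x
    using that \<open>0 \<le> u\<close> strict_mono_on_leD[OF mono, of x u] strict_mono_on_leD[OF mono, of u x]
    by (auto simp: min_def)
  have one_side: "\<bar>min p u - min q u\<bar> \<le> clip_delta \<psi> \<sigma> u"
    if "0 \<le> q" "q \<le> p" "\<psi> p - \<psi> q \<le> \<sigma>" for p q
  proof -
    have "0 \<le> p"
      using that by linarith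
    have "\<psi> q \<le> \<psi> p"
      using that by (intro strict_mono_on_leD[OF mono]) auto
    then have "\<psi> (min p u) - \<psi> (min q u) \<le> \<sigma>"
      unfolding psi_min[OF \<open>0 \<le> q\<close>] psi_min[OF \<open>0 \<le> p\<close>] using that by (auto simp: min_def)
    moreover have "0 \<le> min q u" "min q u \<le> min p u" "min p u \<le> u"
      using that \<open>0 \<le> u\<close> by auto
    ultimately show ?thesis
      using clip_delta_ge[OF mono cont conc, of "min q u" "min p u" u \<sigma>] \<open>0 \<le> \<sigma>\<close> by simp
  qed
  show ?thesis
  proof (cases "x2 \<le> x1")
    case True
    then show ?thesis
      using one_side[OF \<open>0 \<le> x2\<close> True] close by simp
  next
    case False
    then show ?thesis
      using one_side[OF \<open>0 \<le> x1\<close>, of x2] close by (simp add: abs_minus_commute)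
  qed
qed

section \<open>The probably-no-clipping mechanism\<close>

lemma psi_neighbors_public_eq:
  assumes "psi_neighbors \<psi> m \<sigma> E D1 D2" "k \<in> E"
  shows "fst (D1 k) = fst (D2 k)"
proof -
  obtain j where "\<forall>k\<in>E - {j}. D1 k = D2 k" "fst (D1 j) = fst (D2 j)"
    using assms(1) by (auto simp: psi_neighbors_def psi_close_def)
  then show ?thesis
    using assms(2) by (cases "k = j") auto
qed

lemma group_members_cong:
  assumes "\<And>k. k \<in> E \<Longrightarrow> fst (D1 k) = fst (D2 k)"
  shows "group_members G E D1 = group_members G E D2"
  using assms by (auto simp: group_members_def fun_eq_iff)

lemma group_labels_cong:
  assumes "\<And>k. k \<in> E \<Longrightarrow> fst (D1 k) = fst (D2 k)"
  shows "group_labels G E D1 = group_labels G E D2"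
  using assms by (force simp: group_labels_def)

lemma u_star_cong:
  assumes "\<And>k. k \<in> E \<Longrightarrow> fst (D1 k) = fst (D2 k)"
  shows "u_star G E u i D1 = u_star G E u i D2"
  by (simp add: fun_eq_iff u_star_def group_members_cong[of E D1 D2 G, OF assms])

lemma pnc_mechanism_eq_PiM:
  "pnc_mechanism \<psi> \<sigma> \<mu> G E u i D =
     PiM (group_labels G E D) (\<lambda>g. noisy_release (clipped_total G E u i D g)
                                      (clip_delta \<psi> (\<sigma> i) (u_star G E u i D g) / \<mu>))"
  by (simp add: pnc_mechanism_def noisy_release_def Let_def)

lemma u_le_u_star:
  assumes "finite E" "k \<in> E"
  shows "u k i \<le> u_star G E u i D (G (fst (D k)))"
  using assms by (auto simp: u_star_def group_members_def intro: Max_ge)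

lemma clipped_total_replace_one:
  assumes E: "finite E" and j: "j \<in> E" and agree: "\<forall>k\<in>E - {j}. D1 k = D2 k"
    and public_j: "fst (D1 j) = fst (D2 j)"
  shows "\<And>h. h \<noteq> G (fst (D1 j)) \<Longrightarrow> clipped_total G E u i D2 h = clipped_total G E u i D1 h"
    and "clipped_total G E u i D2 (G (fst (D1 j))) - clipped_total G E u i D1 (G (fst (D1 j)))
           = min (snd (D2 j) i) (u_star G E u i D1 (G (fst (D1 j))))
             - min (snd (D1 j) i) (u_star G E u i D1 (G (fst (D1 j))))"
    (is "?diff = _")
proof -
  define g where "g = G (fst (D1 j))"
  have public: "fst (D1 k) = fst (D2 k)" if "k \<in> E" for k
    using that agree public_j by (cases "k = j") auto
  have same_groups:
    "group_members G E D2 = group_members G E D1" "u_star G E u i D2 = u_star G E u i D1"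
    by (simp_all add: group_members_cong[OF public] u_star_cong[OF public])
  let ?f = "\<lambda>D h k. min (snd (D k) i) (u_star G E u i D1 h)"
  show "clipped_total G E u i D2 h = clipped_total G E u i D1 h" if "h \<noteq> G (fst (D1 j))" for h
  proof -
    have "k \<noteq> j" if "k \<in> group_members G E D1 h" for k
      using that \<open>h \<noteq> G (fst (D1 j))\<close> by (auto simp: group_members_def)
    then show ?thesis
      using agree by (auto simp: clipped_total_def same_groups group_members_def intro!: sum.cong)
  qed
  define J where "J = group_members G E D1 g"
  have J: "finite J" "j \<in> J" "J \<subseteq> E"
    using E j by (auto simp: J_def g_def group_members_def)
  have "D1 k = D2 k" if "k \<in> J - {j}" for k
    using that agree J(3) by blast
  then have "(\<Sum>k\<in>J - {j}. ?f D2 g k - ?f D1 g k) = 0"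
    by (intro sum.neutral) simp
  then show "?diff = ?f D2 g j - ?f D1 g j"
    by (simp add: clipped_total_def same_groups sum.remove[OF J(1,2)] flip: g_def J_def sum_subtractf)
qed

lemma clipped_total_neighbors:
  assumes mono: "strict_mono_on {0..} \<psi>" and cont: "continuous_on {0..} \<psi>"
    and conc: "concave_on {0..} \<psi>"
    and E: "finite E" and i: "i \<in> {1..m}" and \<sigma>: "0 \<le> \<sigma> i" and u: "\<forall>j\<in>E. 0 \<le> u j i"
    and D1: "valid_dataset m E D1" and D2: "valid_dataset m E D2"
    and neighbors: "psi_neighbors \<psi> m \<sigma> E D1 D2"
  obtains g where "g \<in> group_labels G E D1"
    and "\<And>h. h \<noteq> g \<Longrightarrow> clipped_total G E u i D2 h = clipped_total G E u i D1 h"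
    and "\<bar>clipped_total G E u i D2 g - clipped_total G E u i D1 g\<bar>
           \<le> clip_delta \<psi> (\<sigma> i) (u_star G E u i D1 g)"
proof -
  obtain j where j: "j \<in> E" and agree: "\<forall>k\<in>E - {j}. D1 k = D2 k"
    and close: "psi_close \<psi> m \<sigma> (D1 j) (D2 j)"
    using neighbors by (auto simp: psi_neighbors_def)
  define g where "g = G (fst (D1 j))"
  have "fst (D1 j) = fst (D2 j)"
    using close by (simp add: psi_close_def)
  note replace = clipped_total_replace_one[OF E j agree this, where G = G and u = u and i = i,
      folded g_def]
  have "0 \<le> u_star G E u i D1 g"
    unfolding g_def using u_le_u_star[OF E j, where u = u and i = i and G = G and D = D1] bspec[OF u j]
    by linarith
  moreover have "0 \<le> snd (D1 j) i" "0 \<le> snd (D2 j) i"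
    using D1 D2 j i by (auto simp: valid_dataset_def)
  moreover have "\<bar>\<psi> (snd (D2 j) i) - \<psi> (snd (D1 j) i)\<bar> \<le> \<sigma> i"
    using close i by (auto simp: psi_close_def abs_minus_commute)
  ultimately have "\<bar>clipped_total G E u i D2 g - clipped_total G E u i D1 g\<bar>
      \<le> clip_delta \<psi> (\<sigma> i) (u_star G E u i D1 g)"
    unfolding replace(2) using abs_min_diff_le_clip_delta[OF mono cont conc] \<sigma> by blast
  moreover have "g \<in> group_labels G E D1"
    using j by (auto simp: g_def group_labels_def)
  ultimately show thesis
    using that replace(1) by blast
qed

lemma pnc_mechanism_Phi_inv_le:
  assumes mono: "strict_mono_on {0..} \<psi>" and cont: "continuous_on {0..} \<psi>"
    and conc: "concave_on {0..} \<psi>"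
    and \<sigma>: "0 \<le> \<sigma> i" and \<mu>: "0 < \<mu>" and i: "i \<in> {1..m}" and E: "finite E"
    and u: "\<forall>j\<in>E. 0 \<le> u j i"
    and D1: "valid_dataset m E D1" and D2: "valid_dataset m E D2"
    and neighbors: "psi_neighbors \<psi> m \<sigma> E D1 D2"
    and S: "S \<in> sets (pnc_mechanism \<psi> \<sigma> \<mu> G E u i D1)"
  shows "Phi_inv (measure (pnc_mechanism \<psi> \<sigma> \<mu> G E u i D2) S)
           \<le> Phi_inv (measure (pnc_mechanism \<psi> \<sigma> \<mu> G E u i D1) S) + \<mu>"
proof -
  have public: "fst (D2 k) = fst (D1 k)" if "k \<in> E" for k
    using psi_neighbors_public_eq[OF neighbors that] by simp
  obtain g where "g \<in> group_labels G E D1"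
    and "\<And>h. h \<noteq> g \<Longrightarrow> clipped_total G E u i D2 h = clipped_total G E u i D1 h"
    and "\<bar>clipped_total G E u i D2 g - clipped_total G E u i D1 g\<bar>
           \<le> clip_delta \<psi> (\<sigma> i) (u_star G E u i D1 g) / \<mu> * \<mu>"
    using clipped_total_neighbors[where G = G and \<sigma> = \<sigma> and u = u and i = i,
        OF mono cont conc E i \<sigma> u D1 D2 neighbors] \<mu>
    by (metis less_irrefl nonzero_eq_divide_eq)
  moreover have "pnc_mechanism \<psi> \<sigma> \<mu> G E u i D2 =
      PiM (group_labels G E D1) (\<lambda>h. noisy_release (clipped_total G E u i D2 h)
                                         (clip_delta \<psi> (\<sigma> i) (u_star G E u i D1 h) / \<mu>))"
    by (simp add: pnc_mechanism_eq_PiM group_labels_cong[OF public] u_star_cong[OF public])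
  moreover have "finite (group_labels G E D1)"
    using E by (simp add: group_labels_def)
  ultimately show ?thesis
    using S \<mu> unfolding pnc_mechanism_eq_PiM by (simp add: Phi_inv_PiM_noisy_release_le)
qed

theorem theorem6p9:
  fixes \<psi> :: "real \<Rightarrow> real" and \<sigma> :: "nat \<Rightarrow> real" and \<mu> :: real and m i :: nat
    and G :: "'p \<Rightarrow> 'g" and E :: "'e set" and u :: "'e \<Rightarrow> nat \<Rightarrow> real"
  assumes "neighbor_function \<psi>"
    and "\<forall>k\<in>{1..m}. 0 \<le> \<sigma> k"
    and "0 < \<mu>"
    and "i \<in> {1..m}"
    and "finite E"
    and "\<forall>j\<in>E. 0 \<le> u j i"
  shows "gaussian_EDP (pnc_mechanism \<psi> \<sigma> \<mu> G E u i) \<mu> \<psi> m \<sigma> E"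
proof -
  have mono: "strict_mono_on {0..} \<psi>" and cont: "continuous_on {0..} \<psi>"
    and conc: "concave_on {0..} \<psi>"
    using assms(1) by (simp_all add: neighbor_function_def)
  have "0 \<le> \<sigma> i"
    using assms(2,4) by blast
  then show ?thesis
    unfolding gaussian_EDP_def
    using pnc_mechanism_Phi_inv_le[where u = u and i = i and \<sigma> = \<sigma>, OF mono cont conc _ assms(3-6)]
    by blast
qed

end
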